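(* Let $n=p_1p_2$, where $p_1,p_2$ are distinct primes. For $i=1,2$ let $s_i,t_i$ be positive integers with $s_it_i=p_i-1$ and let $g_i$ be a generator of $\mathbb{Z}_{p_i}^\times$. Let $d=\gcd(s_1,s_2)$. Let $e$ be an integer satisfying $$e\equiv g_1^{t_1}\pmod{p_1},\qquad e\equiv g_2^{t_2}\pmod{p_2},$$ and let $G=\langle e\rangle$ be the subgroup of $\mathbb{Z}_n^\times$ generated by $e$. Then the coset index function $f_G$ is a $(p_1p_2,\ 1+t_1+t_2+dt_1t_2,\ \{a_0,a_1,a_2\})$ zero-difference function, where $$a_0=\frac{1}{d}(s_1s_2-s_1-s_2)+1,\qquad a_1=\frac{(p_1-1)s_2}{d}-p_1+s_2,\qquad a_2=\frac{(p_2-1)s_1}{d}-p_2+s_1.$$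
   Context: For a subgroup $G$ of $\mathbb{Z}_n^\times$ and $r\in\mathbb{Z}_n$, the coset $rG=\{rg\mid g\in G\}$; these cosets partition $\mathbb{Z}_n$, forming a set $D_G$. The coset index function induced by $G$ is $f_G:\mathbb{Z}_n\to\mathbb{Z}_{|D_G|}$, $f_G(x)=h_G(C_x)$, where $C_x$ is the coset containing $x$ and $h_G:D_G\to\mathbb{Z}_{|D_G|}$ is a fixed bijection. A function $f:A\to B$ between finite abelian groups is an $(n,m,S)$ zero-difference function if $n=|A|$, $m=|f(A)|$, and for every nonzero $a\in A$, $|\{x\in A\mid f(x+a)=f(x)\}|\in S$. Here $A=(\mathbb{Z}_n,+)$. *)

theory Defs
  imports "HOL-Number_Theory.Number_Theory"
begin

text \<open>Z_n is represented by the integers 0..n-1 with arithmetic mod n.\<close>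

definition units_mod :: "nat \<Rightarrow> int set" where
  "units_mod n = {x. 0 \<le> x \<and> x < int n \<and> coprime x (int n)}"

definition cyc_subgroup :: "nat \<Rightarrow> int \<Rightarrow> int set" where
  "cyc_subgroup n e = {(e ^ k) mod int n | k. True}"

definition coset_mod :: "nat \<Rightarrow> int set \<Rightarrow> int \<Rightarrow> int set" where
  "coset_mod n G r = {(r * g) mod int n | g. g \<in> G}"

definition coset_family :: "nat \<Rightarrow> int set \<Rightarrow> int set set" where
  "coset_family n G = coset_mod n G ` {0..<int n}"

definition coset_index_fn :: "nat \<Rightarrow> int set \<Rightarrow> (int set \<Rightarrow> nat) \<Rightarrow> int \<Rightarrow> nat" where
  "coset_index_fn n G h x = h (THE C. C \<in> coset_family n G \<and> x \<in> C)"

definition zd_function :: "nat \<Rightarrow> (int \<Rightarrow> 'b) \<Rightarrow> nat \<Rightarrow> int set \<Rightarrow> bool" where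
  "zd_function n f m S \<longleftrightarrow>
     card (f ` {0..<int n}) = m \<and>
     (\<forall>a \<in> {1..<int n}. int (card {x \<in> {0..<int n}. f ((x + a) mod int n) = f x}) \<in> S)"

end

theory Submission
  imports Defs
begin

text \<open>
  Since \<open>g\<^sub>i\<close> is a primitive root, \<open>e \<equiv> g\<^sub>i ^ t\<^sub>i\<close> has order \<open>s\<^sub>i\<close> modulo \<open>p\<^sub>i\<close>; so
  \<open>G = \<langle>e\<rangle>\<close> has order \<open>L = lcm s\<^sub>1 s\<^sub>2\<close> and the cosets \<open>x G\<close> are the orbits of
  multiplication by \<open>e\<close>. The size of \<open>x G\<close> depends only on which of \<open>p\<^sub>1, p\<^sub>2\<close> divide
  \<open>x\<close> (it is \<open>1, s\<^sub>1, s\<^sub>2\<close> or \<open>L\<close>), and by the Chinese remainder theorem these four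
  classes have \<open>1, p\<^sub>1 - 1, p\<^sub>2 - 1, (p\<^sub>1 - 1)(p\<^sub>2 - 1)\<close> elements, which gives
  \<open>1 + t\<^sub>1 + t\<^sub>2 + d t\<^sub>1 t\<^sub>2\<close> cosets.

  For \<open>a \<noteq> 0\<close>, \<open>f\<^sub>G(x + a) = f\<^sub>G(x)\<close> iff \<open>x (e\<^sup>k - 1) = a\<close> for some \<open>k\<close>. If \<open>a\<close> is a
  unit, these \<open>x\<close> correspond to the exponents \<open>k mod L\<close> with \<open>e\<^sup>k \<noteq> 1\<close> modulo both primes,
  and there are \<open>L - L/s\<^sub>1 - L/s\<^sub>2 + 1 = a\<^sub>0\<close> of them. If \<open>p\<^sub>1\<close> divides \<open>a\<close> but
  \<open>p\<^sub>2\<close> does not, a solution is either \<open>0\<close> modulo \<open>p\<^sub>1\<close>, with \<open>k\<close> free, or a unit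
  modulo \<open>p\<^sub>1\<close> with \<open>s\<^sub>1 | k\<close>; modulo \<open>p\<^sub>2\<close> it is then one of the \<open>s\<^sub>2 - 1\<close>
  solutions for the base \<open>e\<close>, resp. of the \<open>s\<^sub>2/d - 1\<close> solutions for the base
  \<open>e ^ s\<^sub>1\<close> (of order \<open>s\<^sub>2/d\<close>), which gives \<open>a\<^sub>1\<close>. The case \<open>p\<^sub>2 | a\<close> is symmetric.
\<close>

lemma card_eq_by_bijective_relation:
  assumes "finite B"
    and "\<And>x. x \<in> A \<Longrightarrow> \<exists>!y. y \<in> B \<and> R x y"
    and "\<And>y. y \<in> B \<Longrightarrow> \<exists>!x. x \<in> A \<and> R x y"
  shows "card A = card B"
proof -
  define f where "f x = (THE y. y \<in> B \<and> R x y)" for x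
  have f: "f x \<in> B \<and> R x (f x)" if "x \<in> A" for x
    using theI'[OF assms(2)[OF that]] unfolding f_def .
  have "bij_betw f A B"
  proof (rule bij_betwI')
    show "f x = f y \<longleftrightarrow> x = y" if "x \<in> A" "y \<in> A" for x y
      using f[OF that(1)] f[OF that(2)] assms(3) that by metis
    show "f x \<in> B" if "x \<in> A" for x
      using f[OF that] by blast
    show "\<exists>x\<in>A. y = f x" if "y \<in> B" for y
      using assms(2,3) f that by metis
  qed
  then show ?thesis
    by (rule bij_betw_same_card)
qed

lemma card_range_periodic:
  assumes "c > 0" and "\<And>k j. f k = f j \<longleftrightarrow> [k = j] (mod c)"
  shows "card (range f) = c"
proof -
  have "f k = f (k mod c)" for k
    using assms(2) by (simp add: cong_def)
  then have "range f = f ` {..<c}"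
    using assms(1) by (auto intro: image_eqI[where x = "_ mod c"])
  moreover have "inj_on f {..<c}"
    using assms(2) by (auto simp: inj_on_def cong_def)
  ultimately show ?thesis
    by (simp add: card_image)
qed

lemma card_multiples_below:
  assumes "s > 0" and "s dvd M"
  shows "card {k \<in> {..<M}. s dvd k} = M div s"
proof -
  have "{k \<in> {..<M}. s dvd k} = (\<lambda>i. s * i) ` {..<M div s}"
    using assms by (auto simp: dvd_def)
  then show ?thesis
    using assms(1) by (simp add: card_image inj_on_def)
qed

lemma card_nondivisible_below_lcm:
  fixes s1 s2 :: nat
  assumes "s1 > 0" and "s2 > 0"
  shows "card {k \<in> {..<lcm s1 s2}. \<not> s1 dvd k \<and> \<not> s2 dvd k} + lcm s1 s2 div s1 + lcm s1 s2 div s2 =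
         lcm s1 s2 + 1"
proof -
  let ?M = "\<lambda>s. {k \<in> {..<lcm s1 s2}. s dvd k}"
  have "card (?M (lcm s1 s2)) = 1"
    using card_multiples_below[of "lcm s1 s2" "lcm s1 s2"] assms by (simp add: lcm_pos_nat)
  moreover have "?M s1 \<inter> ?M s2 = ?M (lcm s1 s2)"
    by auto
  ultimately have "card (?M s1 \<union> ?M s2) + 1 = lcm s1 s2 div s1 + lcm s1 s2 div s2"
    using card_Un_Int[of "?M s1" "?M s2"] card_multiples_below assms by simp
  moreover have "{k \<in> {..<lcm s1 s2}. \<not> s1 dvd k \<and> \<not> s2 dvd k} = {..<lcm s1 s2} - (?M s1 \<union> ?M s2)"
    by auto
  moreover have sub: "?M s1 \<union> ?M s2 \<subseteq> {..<lcm s1 s2}"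
    by auto
  ultimately show ?thesis
    using card_mono[OF _ sub] card_Diff_subset[OF _ sub] by simp
qed

lemma lcm_minus_quotients_int:
  fixes s1 s2 :: nat
  assumes "s1 > 0" and "s2 > 0"
  shows "int (lcm s1 s2) - int (lcm s1 s2 div s1) - int (lcm s1 s2 div s2) =
         (int s1 * int s2 - int s1 - int s2) div int (gcd s1 s2)"
proof -
  define d where "d = gcd s1 s2"
  obtain u w where u: "s1 = d * u" and w: "s2 = d * w"
    unfolding d_def by (meson dvd_def gcd_dvd1 gcd_dvd2)
  have "d > 0"
    using assms by (simp add: d_def)
  have "d * (d * u * w) = d * lcm s1 s2"
    using prod_gcd_lcm_nat[of s1 s2] unfolding d_def[symmetric] by (simp add: u w ac_simps)
  then have "lcm s1 s2 = d * u * w"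
    using \<open>d > 0\<close> by simp
  moreover have "int s1 * int s2 - int s1 - int s2 = int d * (int d * int u * int w - int u - int w)"
    by (simp add: u w algebra_simps)
  ultimately show ?thesis
    unfolding d_def[symmetric] using assms \<open>d > 0\<close> by (simp add: u w)
qed

lemma pred_add_mult_pred_div_int:
  fixes m s g :: nat
  assumes "m > 0" and "s > 0" and "g dvd s"
  shows "int ((s - 1) + (m - 1) * (s div g - 1)) = ((int m - 1) * int s) div int g - int m + int s"
proof -
  obtain w where s: "s = g * w"
    using assms(3) by blast
  then have "g > 0" "w \<ge> 1"
    using assms(2) by auto
  moreover have "s \<ge> 1" "m \<ge> 1"
    using assms(1,2) by auto
  moreover have "s div g = w"
    using \<open>g > 0\<close> by (simp add: s)
  ultimately have "int ((s - 1) + (m - 1) * (s div g - 1)) = (int s - 1) + (int m - 1) * (int w - 1)"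
    by (simp only: of_nat_add of_nat_mult of_nat_diff of_nat_1)
  moreover have "((int m - 1) * int s) div int g = (int m - 1) * int w"
    using \<open>g > 0\<close> by (simp add: s mult.left_commute)
  ultimately show ?thesis
    by (simp add: algebra_simps)
qed

lemma card_crt_preimage:
  fixes p q :: int
  assumes "coprime p q" and "p > 0" and "q > 0"
  shows "card {x \<in> {0..<p * q}. P (x mod p) (x mod q)} = card {(y, z) \<in> {0..<p} \<times> {0..<q}. P y z}"
proof -
  let ?crt = "\<lambda>x. (x mod p, x mod q)"
  have inj: "inj_on ?crt {0..<p * q}"
  proof (rule inj_onI)
    fix x y assume "x \<in> {0..<p * q}" "y \<in> {0..<p * q}" "?crt x = ?crt y"
    then show "x = y"
      using coprime_cong_mult[OF _ _ assms(1), of x y] by (auto simp: cong_def intro: cong_less_imp_eq_int)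
  qed
  have onto: "?crt ` {0..<p * q} = {0..<p} \<times> {0..<q}"
  proof (rule card_subset_eq)
    show "?crt ` {0..<p * q} \<subseteq> {0..<p} \<times> {0..<q}"
      using assms by auto
    show "card (?crt ` {0..<p * q}) = card ({0..<p} \<times> {0..<q})"
      using assms by (simp add: card_image[OF inj] card_cartesian_product nat_mult_distrib)
  qed simp
  have image: "?crt ` {x \<in> {0..<p * q}. P (x mod p) (x mod q)} = {(y, z) \<in> {0..<p} \<times> {0..<q}. P y z}"
  proof
    show "{(y, z) \<in> {0..<p} \<times> {0..<q}. P y z} \<subseteq> ?crt ` {x \<in> {0..<p * q}. P (x mod p) (x mod q)}"
    proof
      fix w assume "w \<in> {(y, z) \<in> {0..<p} \<times> {0..<q}. P y z}"
      moreover from this obtain x where "x \<in> {0..<p * q}" "w = ?crt x"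
        unfolding onto[symmetric] by blast
      ultimately show "w \<in> ?crt ` {x \<in> {0..<p * q}. P (x mod p) (x mod q)}"
        by auto
    qed
  qed (use assms in auto)
  have "inj_on ?crt {x \<in> {0..<p * q}. P (x mod p) (x mod q)}"
    using inj by (rule inj_on_subset) auto
  then have "card (?crt ` {x \<in> {0..<p * q}. P (x mod p) (x mod q)}) = card {x \<in> {0..<p * q}. P (x mod p) (x mod q)}"
    by (rule card_image)
  then show ?thesis
    using image by simp
qed

lemma coprime_prime_right_iff:
  fixes p a :: int
  assumes "prime p"
  shows "coprime a p \<longleftrightarrow> \<not> p dvd a"
  using assms prime_imp_coprime[of p a] coprime_common_divisor[of a p p] not_prime_unit[of p]
  by (auto simp: coprime_commute)

lemma cong_lcm_iff_nat:
  fixes k j a b :: nat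
  shows "[k = j] (mod lcm a b) \<longleftrightarrow> [k = j] (mod a) \<and> [k = j] (mod b)"
  by (meson cong_cong_lcm_nat cong_dvd_modulus_nat dvd_lcm1 dvd_lcm2)

lemma cong_mult_cancel_gcd_nat:
  fixes a m k j :: nat
  assumes "m > 0"
  shows "[a * k = a * j] (mod m) \<longleftrightarrow> [k = j] (mod m div gcd a m)"
proof -
  define d where "d = gcd a m"
  have "d > 0"
    using assms by (simp add: d_def)
  obtain a' m' where a': "a = d * a'" and m': "m = d * m'"
    unfolding d_def by (meson dvd_def gcd_dvd1 gcd_dvd2)
  have "coprime (a div d) (m div d)"
    unfolding d_def using assms by (intro div_gcd_coprime) auto
  then have "coprime a' m'"
    using \<open>d > 0\<close> by (simp add: a' m')
  have "m div gcd a m = m'"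
    unfolding d_def[symmetric] using \<open>d > 0\<close> by (simp add: m')
  have "[a * k = a * j] (mod m) \<longleftrightarrow> [a' * k = a' * j] (mod m')"
    using \<open>d > 0\<close> by (simp add: a' m' cong_def mod_mult_mult1 mult.assoc)
  also have "\<dots> \<longleftrightarrow> [k = j] (mod m')"
    using \<open>coprime a' m'\<close> by (rule cong_mult_lcancel_nat)
  finally show ?thesis
    unfolding \<open>m div gcd a m = m'\<close> .
qed

lemma primroot_pow_cong_iff:
  fixes m s t g :: nat and e :: int
  assumes root: "residue_primroot m g" and st: "s * t = totient m"
    and e: "[e = int g ^ t] (mod int m)"
  shows "[e ^ k = e ^ j] (mod int m) \<longleftrightarrow> [k = j] (mod s)"
proof -
  have "s * t > 0"
    using root st by (simp add: residue_primroot_def)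
  then have "t > 0"
    by simp
  have e_pow: "[e ^ k = int (g ^ (t * k))] (mod int m)" for k
    using cong_pow[OF e, of k] by (simp add: power_mult)
  have "[e ^ k = e ^ j] (mod int m) \<longleftrightarrow> [int (g ^ (t * k)) = int (g ^ (t * j))] (mod int m)"
    using e_pow[of k] e_pow[of j] by (meson cong_sym cong_trans)
  also have "\<dots> \<longleftrightarrow> [g ^ (t * k) = g ^ (t * j)] (mod m)"
    by (rule cong_int_iff)
  also have "\<dots> \<longleftrightarrow> [t * k = t * j] (mod t * s)"
    using root order_divides_expdiff[of m g] st by (simp add: residue_primroot_def mult.commute)
  also have "\<dots> \<longleftrightarrow> [k = j] (mod s)"
    using \<open>t > 0\<close> by (simp add: cong_def mod_mult_mult1)
  finally show ?thesis .
qed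

lemma prime_mult_pow_cong_iff:
  fixes p x b :: int
  assumes "prime p" and order: "\<And>k j. [b ^ k = b ^ j] (mod p) \<longleftrightarrow> [k = j] (mod r)"
  shows "[x * b ^ k = x * b ^ j] (mod p) \<longleftrightarrow> p dvd x \<or> [k = j] (mod r)"
proof (cases "p dvd x")
  case True
  then show ?thesis
    by (simp add: cong_iff_dvd_diff flip: right_diff_distrib)
next
  case False
  then have "coprime x p"
    using assms(1) coprime_prime_right_iff by blast
  then show ?thesis
    using False by (simp add: cong_mult_lcancel order)
qed

text \<open>
  If \<open>a\<close> is a unit, a solution \<open>y\<close> of \<open>y (b\<^sup>k - 1) = a\<close> and \<open>b\<^sup>k - 1\<close> are units as well,
  so \<open>y\<close> and the exponent \<open>k\<close> modulo the order \<open>r\<close> of \<open>b\<close> determine each other.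
\<close>
lemma card_pow_diff_solutions:
  fixes m a b :: int and r :: nat
  assumes "m > 0" and a: "coprime a m" and "r > 0"
    and order: "\<And>k j. [b ^ k = b ^ j] (mod m) \<longleftrightarrow> [k = j] (mod r)"
  shows "card {y \<in> {0..<m}. \<exists>k. [y * (b ^ k - 1) = a] (mod m)} =
         card {k \<in> {..<r}. coprime (b ^ k - 1) m}"
proof (rule card_eq_by_bijective_relation[where R = "\<lambda>y k. [y * (b ^ k - 1) = a] (mod m)"])
  fix y assume "y \<in> {y \<in> {0..<m}. \<exists>k. [y * (b ^ k - 1) = a] (mod m)}"
  then obtain k where k: "[y * (b ^ k - 1) = a] (mod m)"
    by auto
  have "[b ^ k = b ^ (k mod r)] (mod m)"
    unfolding order by (simp add: cong_def)
  then have solves: "[y * (b ^ (k mod r) - 1) = a] (mod m)"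
    using k by (meson cong_diff cong_refl cong_scalar_left cong_sym cong_trans)
  then have units: "coprime y m" "coprime (b ^ (k mod r) - 1) m"
    using cong_imp_coprime[OF cong_sym[OF solves] a] by auto
  show "\<exists>!k. k \<in> {k \<in> {..<r}. coprime (b ^ k - 1) m} \<and> [y * (b ^ k - 1) = a] (mod m)"
  proof (rule ex1I[of _ "k mod r"])
    fix j assume "j \<in> {k \<in> {..<r}. coprime (b ^ k - 1) m} \<and> [y * (b ^ j - 1) = a] (mod m)"
    then have "j < r" "[y * (b ^ j - 1) = y * (b ^ (k mod r) - 1)] (mod m)"
      using solves by (auto intro: cong_trans cong_sym)
    then have "[b ^ j = b ^ (k mod r)] (mod m)"
      using cong_mult_lcancel[OF units(1)] cong_add_rcancel[of "b ^ j" "-1"] by simp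
    then have "[j = k mod r] (mod r)"
      by (simp only: order)
    then show "j = k mod r"
      using \<open>j < r\<close> by (simp add: cong_def)
  qed (use solves units \<open>r > 0\<close> in simp)
next
  fix k assume "k \<in> {k \<in> {..<r}. coprime (b ^ k - 1) m}"
  then have unit: "coprime (b ^ k - 1) m"
    by simp
  obtain z where "[(b ^ k - 1) * z = 1] (mod m)"
    using cong_solve_coprime_int[OF unit] by blast
  then have "[(b ^ k - 1) * z * a = 1 * a] (mod m)"
    by (rule cong_scalar_right)
  then have solves: "[(z * a) mod m * (b ^ k - 1) = a] (mod m)"
    by (simp add: cong_def mod_mult_right_eq ac_simps)
  show "\<exists>!y. y \<in> {y \<in> {0..<m}. \<exists>k. [y * (b ^ k - 1) = a] (mod m)} \<and> [y * (b ^ k - 1) = a] (mod m)"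
  proof (rule ex1I[of _ "(z * a) mod m"])
    fix y assume "y \<in> {y \<in> {0..<m}. \<exists>k. [y * (b ^ k - 1) = a] (mod m)} \<and> [y * (b ^ k - 1) = a] (mod m)"
    then have "0 \<le> y" "y < m" "[y * (b ^ k - 1) = (z * a) mod m * (b ^ k - 1)] (mod m)"
      using solves by (auto intro: cong_trans cong_sym)
    then show "y = (z * a) mod m"
      using \<open>m > 0\<close> cong_mult_rcancel[OF unit] by (auto intro: cong_less_imp_eq_int)
  qed (use solves \<open>m > 0\<close> in auto)
qed simp

lemma card_pow_diff_solutions_prime:
  fixes q a b :: int and r :: nat
  assumes "prime q" and "\<not> q dvd a" and "r > 0"
    and order: "\<And>k j. [b ^ k = b ^ j] (mod q) \<longleftrightarrow> [k = j] (mod r)"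
  shows "card {y \<in> {0..<q}. \<exists>k. [y * (b ^ k - 1) = a] (mod q)} = r - 1"
proof -
  have unit_iff: "coprime (b ^ k - 1) q \<longleftrightarrow> k mod r \<noteq> 0" for k
  proof -
    have "coprime (b ^ k - 1) q \<longleftrightarrow> \<not> [b ^ k = b ^ 0] (mod q)"
      using \<open>prime q\<close> by (simp add: cong_iff_dvd_diff coprime_prime_right_iff)
    also have "\<dots> \<longleftrightarrow> \<not> [k = 0] (mod r)"
      by (simp only: order)
    finally show ?thesis
      by (simp add: cong_def)
  qed
  have "k \<in> {k \<in> {..<r}. coprime (b ^ k - 1) q} \<longleftrightarrow> k \<in> {1..<r}" for k
    unfolding unit_iff by auto
  then have "{k \<in> {..<r}. coprime (b ^ k - 1) q} = {1..<r}"
    by blast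
  moreover have "coprime a q"
    using assms(1,2) by (simp add: coprime_prime_right_iff)
  ultimately show ?thesis
    using card_pow_diff_solutions[OF _ _ \<open>r > 0\<close> order] assms(1) prime_gt_0_int by simp
qed

locale cyclic_cosets =
  fixes n :: nat and e :: int and L :: nat
  assumes n_pos: "n > 0" and period_pos: "L > 0" and pow_period: "[e ^ L = 1] (mod int n)"
begin

abbreviation coset :: "int \<Rightarrow> int set" where
  "coset x \<equiv> coset_mod n (cyc_subgroup n e) x"

lemma coset_eq_range: "coset x = range (\<lambda>k. (x * e ^ k) mod int n)"
  unfolding coset_mod_def cyc_subgroup_def by (auto simp: mod_mult_right_eq) (metis mod_mult_right_eq)

lemma self_mem_coset: "x \<in> {0..<int n} \<Longrightarrow> x \<in> coset x"
  unfolding coset_eq_range by (auto intro: range_eqI[where x = 0])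

lemma coset_subset_range: "coset x \<subseteq> {0..<int n}"
  unfolding coset_eq_range using n_pos by auto

lemma coset_eq_if_mem:
  assumes x: "x \<in> {0..<int n}" and y: "y \<in> coset x"
  shows "coset y = coset x"
proof -
  obtain k where k: "y = (x * e ^ k) mod int n"
    using y unfolding coset_eq_range by blast
  have shift: "(y * e ^ j) mod int n = (x * e ^ (k + j)) mod int n" for j
    unfolding k by (simp add: mod_mult_left_eq power_add mult.assoc)
  have "[e ^ (k * L) = 1] (mod int n)"
    using cong_pow[OF pow_period, of k] by (simp add: power_mult mult.commute)
  then have "(x * e ^ (k * L)) mod int n = x"
    using cong_scalar_left[of _ 1 "int n" x] x by (auto simp: cong_def)
  moreover have "k * L = k + k * (L - 1)"
    using period_pos by (cases L) auto
  ultimately have "(x * e ^ j) mod int n = (y * e ^ (k * (L - 1) + j)) mod int n" for j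
    unfolding shift by (metis add.assoc power_add mult.assoc mod_mult_left_eq)
  then show ?thesis
    unfolding coset_eq_range by (auto simp: shift)
qed

lemma coset_index_fn_eq:
  assumes "x \<in> {0..<int n}"
  shows "coset_index_fn n (cyc_subgroup n e) h x = h (coset x)"
proof -
  have "(THE C. C \<in> coset_family n (cyc_subgroup n e) \<and> x \<in> C) = coset x"
  proof (rule the_equality)
    show "coset x \<in> coset_family n (cyc_subgroup n e) \<and> x \<in> coset x"
      using assms self_mem_coset by (simp add: coset_family_def)
    show "C = coset x" if "C \<in> coset_family n (cyc_subgroup n e) \<and> x \<in> C" for C
      using that coset_eq_if_mem by (auto simp: coset_family_def)
  qed
  then show ?thesis
    by (simp add: coset_index_fn_def)
qed

lemma card_coset_index_fn_image:
  assumes "inj_on h (coset_family n (cyc_subgroup n e))"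
  shows "card (coset_index_fn n (cyc_subgroup n e) h ` {0..<int n}) = card (coset_family n (cyc_subgroup n e))"
proof -
  have "coset_index_fn n (cyc_subgroup n e) h ` {0..<int n} = h ` coset_family n (cyc_subgroup n e)"
    unfolding coset_family_def by (auto simp: coset_index_fn_eq image_image)
  then show ?thesis
    using assms by (simp add: card_image)
qed

lemma card_coset_image:
  assumes "A \<subseteq> {0..<int n}" and "\<And>x. x \<in> A \<Longrightarrow> coset x \<subseteq> A"
    and "\<And>x. x \<in> A \<Longrightarrow> card (coset x) = c"
  shows "c * card (coset ` A) = card A"
proof -
  have union: "\<Union> (coset ` A) = A"
    using assms(1,2) self_mem_coset by blast
  have "c * card (coset ` A) = card (\<Union> (coset ` A))"
  proof (rule card_partition)
    show "C1 \<inter> C2 = {}" if "C1 \<in> coset ` A" "C2 \<in> coset ` A" "C1 \<noteq> C2" for C1 C2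
      using that assms(1) coset_eq_if_mem by blast
  qed (use finite_subset[OF assms(1)] union assms(3) in auto)
  then show ?thesis
    using union by simp
qed

definition zero_diff_set :: "int \<Rightarrow> int set" where
  "zero_diff_set a = {x \<in> {0..<int n}. \<exists>k. [x * (e ^ k - 1) = a] (mod int n)}"

lemma coset_index_fn_zero_diff:
  assumes "inj_on h (coset_family n (cyc_subgroup n e))"
  shows "{x \<in> {0..<int n}. coset_index_fn n (cyc_subgroup n e) h ((x + a) mod int n) =
                            coset_index_fn n (cyc_subgroup n e) h x} = zero_diff_set a"
proof -
  have "coset_index_fn n (cyc_subgroup n e) h ((x + a) mod int n) = coset_index_fn n (cyc_subgroup n e) h x
        \<longleftrightarrow> (\<exists>k. [x * (e ^ k - 1) = a] (mod int n))" if x: "x \<in> {0..<int n}" for x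
  proof -
    let ?y = "(x + a) mod int n"
    have y: "?y \<in> {0..<int n}"
      using n_pos by simp
    have "coset_index_fn n (cyc_subgroup n e) h ?y = coset_index_fn n (cyc_subgroup n e) h x
          \<longleftrightarrow> coset ?y = coset x"
      using x y assms by (simp add: coset_index_fn_eq inj_on_eq_iff coset_family_def)
    also have "\<dots> \<longleftrightarrow> ?y \<in> coset x"
      using x y self_mem_coset coset_eq_if_mem by metis
    also have "\<dots> \<longleftrightarrow> (\<exists>k. [x * e ^ k = x + a] (mod int n))"
      unfolding coset_eq_range by (auto simp: cong_def) (metis rangeI)
    also have "\<dots> \<longleftrightarrow> (\<exists>k. [x * (e ^ k - 1) = a] (mod int n))"
      by (simp add: cong_iff_dvd_diff algebra_simps)
    finally show ?thesis .
  qed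
  then show ?thesis
    unfolding zero_diff_set_def by auto
qed

end

locale prime_pair_cosets =
  fixes p q :: nat and e :: int and s1 s2 :: nat
  assumes prime_p: "prime p" and prime_q: "prime q" and distinct_primes: "p \<noteq> q"
    and s1_pos: "s1 > 0" and s2_pos: "s2 > 0"
    and order_p: "\<And>k j. [e ^ k = e ^ j] (mod int p) \<longleftrightarrow> [k = j] (mod s1)"
    and order_q: "\<And>k j. [e ^ k = e ^ j] (mod int q) \<longleftrightarrow> [k = j] (mod s2)"
begin

lemma prime_int: "prime (int p)" "prime (int q)"
  using prime_p prime_q by simp_all

lemma cong_mod_pq_iff:
  "[a = b] (mod int (p * q)) \<longleftrightarrow> [a = b] (mod int p) \<and> [a = b] (mod int q)"
  using coprime_cong_mult[of a b "int p" "int q"] primes_coprime[OF prime_int] distinct_primes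
    cong_modulus_mult[of a b "int p" "int q"] cong_modulus_mult[of a b "int q" "int p"]
  by (auto simp: mult.commute)

lemma order_pq: "[e ^ k = e ^ j] (mod int (p * q)) \<longleftrightarrow> [k = j] (mod lcm s1 s2)"
  unfolding cong_mod_pq_iff order_p order_q cong_lcm_iff_nat ..

sublocale cyclic_cosets "p * q" e "lcm s1 s2"
proof
  show "p * q > 0"
    using prime_p prime_q by (simp add: prime_gt_0_nat)
  show "lcm s1 s2 > 0"
    using s1_pos s2_pos by (simp add: lcm_pos_nat)
  show "[e ^ lcm s1 s2 = 1] (mod int (p * q))"
    using order_pq[of "lcm s1 s2" 0] by (simp add: cong_def)
qed

lemma prime_pair_cosets_swap: "prime_pair_cosets q p e s2 s1"
  using prime_p prime_q distinct_primes s1_pos s2_pos order_p order_q by unfold_locales auto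

lemma not_dvd_pow: "\<not> int p dvd e ^ k" "\<not> int q dvd e ^ k"
proof -
  have "[1 = e ^ s1] (mod int p)" "[1 = e ^ s2] (mod int q)"
    using order_p[of 0 s1] order_q[of 0 s2] by (simp_all add: cong_def)
  then have "coprime (e ^ s1) (int p)" "coprime (e ^ s2) (int q)"
    using cong_imp_coprime by fastforce+
  then have "coprime (e ^ k) (int p)" "coprime (e ^ k) (int q)"
    using s1_pos s2_pos by simp_all
  then show "\<not> int p dvd e ^ k" "\<not> int q dvd e ^ k"
    using prime_int coprime_prime_right_iff by blast+
qed

lemma dvd_coset_iff:
  assumes "y \<in> coset x"
  shows "int p dvd y \<longleftrightarrow> int p dvd x" and "int q dvd y \<longleftrightarrow> int q dvd x"
proof -
  obtain k where k: "y = (x * e ^ k) mod int (p * q)"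
    using assms unfolding coset_eq_range by blast
  show "int p dvd y \<longleftrightarrow> int p dvd x" "int q dvd y \<longleftrightarrow> int q dvd x"
    unfolding k using prime_int not_dvd_pow by (auto simp: dvd_mod_iff prime_dvd_mult_iff)
qed

lemma card_coset:
  "card (coset x) = lcm (if int p dvd x then 1 else s1) (if int q dvd x then 1 else s2)"
  unfolding coset_eq_range
proof (rule card_range_periodic)
  show "lcm (if int p dvd x then 1 else s1) (if int q dvd x then 1 else s2) > 0"
    using s1_pos s2_pos by (simp add: lcm_pos_nat)
  fix k j
  have "(x * e ^ k) mod int (p * q) = (x * e ^ j) mod int (p * q) \<longleftrightarrow>
        (int p dvd x \<or> [k = j] (mod s1)) \<and> (int q dvd x \<or> [k = j] (mod s2))"
    using prime_mult_pow_cong_iff[OF prime_int(1) order_p] prime_mult_pow_cong_iff[OF prime_int(2) order_q]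
    by (simp only: cong_mod_pq_iff flip: cong_def)
  then show "(x * e ^ k) mod int (p * q) = (x * e ^ j) mod int (p * q) \<longleftrightarrow>
      [k = j] (mod lcm (if int p dvd x then 1 else s1) (if int q dvd x then 1 else s2))"
    by (simp add: cong_lcm_iff_nat)
qed

definition divisor_class :: "bool \<times> bool \<Rightarrow> int set" where
  "divisor_class b = {x \<in> {0..<int (p * q)}. (int p dvd x, int q dvd x) = b}"

lemma card_divisor_class:
  "card (divisor_class (b1, b2)) = (if b1 then 1 else p - 1) * (if b2 then 1 else q - 1)"
proof -
  have residues: "card {y \<in> {0..<int m}. int m dvd y \<longleftrightarrow> b} = (if b then 1 else m - 1)"
    if "prime m" for m :: nat and b
  proof -
    have "{y \<in> {0..<int m}. int m dvd y} = {0}"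
      using that prime_gt_0_nat[of m] by (auto simp: dvd_eq_mod_eq_0)
    moreover have "{y \<in> {0..<int m}. \<not> int m dvd y} = {1..<int m}"
      using that prime_gt_0_nat[of m] by (auto simp: zdvd_not_zless) (smt (verit) dvd_0_right)
    ultimately show ?thesis
      by (cases b) (simp_all add: nat_diff_distrib)
  qed
  have "card (divisor_class (b1, b2)) =
        card {(y, z) \<in> {0..<int p} \<times> {0..<int q}. (int p dvd y \<longleftrightarrow> b1) \<and> (int q dvd z \<longleftrightarrow> b2)}"
    unfolding divisor_class_def of_nat_mult
    using card_crt_preimage[of "int p" "int q" "\<lambda>y z. (int p dvd y \<longleftrightarrow> b1) \<and> (int q dvd z \<longleftrightarrow> b2)"]
      primes_coprime[OF prime_int] distinct_primes prime_p prime_q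
    by (simp add: dvd_mod_iff prime_gt_0_nat)
  also have "{(y, z) \<in> {0..<int p} \<times> {0..<int q}. (int p dvd y \<longleftrightarrow> b1) \<and> (int q dvd z \<longleftrightarrow> b2)} =
      {y \<in> {0..<int p}. int p dvd y \<longleftrightarrow> b1} \<times> {z \<in> {0..<int q}. int q dvd z \<longleftrightarrow> b2}"
    by auto
  finally show ?thesis
    using residues prime_p prime_q by (simp add: card_cartesian_product)
qed

lemma finite_divisor_class: "finite (divisor_class b)"
  unfolding divisor_class_def by (rule finite_subset[of _ "{0..<int (p * q)}"]) auto

lemma coset_subset_divisor_class: "x \<in> divisor_class b \<Longrightarrow> coset x \<subseteq> divisor_class b"
  using coset_subset_range dvd_coset_iff unfolding divisor_class_def by blast

lemma card_cosets_divisor_class: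
  "lcm (if b1 then 1 else s1) (if b2 then 1 else s2) * card (coset ` divisor_class (b1, b2)) =
   card (divisor_class (b1, b2))"
proof (rule card_coset_image)
  show "divisor_class (b1, b2) \<subseteq> {0..<int (p * q)}"
    by (auto simp: divisor_class_def)
  show "coset x \<subseteq> divisor_class (b1, b2)" if "x \<in> divisor_class (b1, b2)" for x
    using that by (rule coset_subset_divisor_class)
  show "card (coset x) = lcm (if b1 then 1 else s1) (if b2 then 1 else s2)"
    if "x \<in> divisor_class (b1, b2)" for x
    using that by (auto simp: card_coset divisor_class_def)
qed

lemma coset_family_eq_UN_divisor_class:
  "coset_family (p * q) (cyc_subgroup (p * q) e) = (\<Union>b. coset ` divisor_class b)"
proof -
  have "x \<in> divisor_class (int p dvd x, int q dvd x)" if "x \<in> {0..<int (p * q)}" for x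
    using that by (simp add: divisor_class_def)
  then have "{0..<int (p * q)} \<subseteq> (\<Union>b. divisor_class b)"
    by blast
  moreover have "divisor_class b \<subseteq> {0..<int (p * q)}" for b
    by (auto simp: divisor_class_def)
  ultimately have "{0..<int (p * q)} = (\<Union>b. divisor_class b)"
    by blast
  then show ?thesis
    by (simp only: coset_family_def image_UN)
qed

lemma cosets_divisor_class_disjoint:
  assumes "b \<noteq> c"
  shows "coset ` divisor_class b \<inter> coset ` divisor_class c = {}"
proof (rule ccontr)
  assume "coset ` divisor_class b \<inter> coset ` divisor_class c \<noteq> {}"
  then obtain x y where x: "x \<in> divisor_class b" and y: "y \<in> divisor_class c" and "coset y = coset x"
    by blast
  moreover have "y \<in> coset y"
    using y self_mem_coset by (simp add: divisor_class_def)
  ultimately have "y \<in> divisor_class b"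
    using coset_subset_divisor_class by blast
  with y assms show False
    by (simp add: divisor_class_def)
qed

lemma card_coset_family:
  assumes "s1 * t1 = p - 1" and "s2 * t2 = q - 1"
  shows "card (coset_family (p * q) (cyc_subgroup (p * q) e)) = 1 + t1 + t2 + gcd s1 s2 * t1 * t2"
proof -
  let ?N = "\<lambda>b. card (coset ` divisor_class b)"
  have count: "lcm (if b1 then 1 else s1) (if b2 then 1 else s2) * ?N (b1, b2) =
      (if b1 then 1 else p - 1) * (if b2 then 1 else q - 1)" for b1 b2
    using card_cosets_divisor_class card_divisor_class by simp
  have "s1 * ?N (False, True) = s1 * t1" "s2 * ?N (True, False) = s2 * t2"
    using count[of False True] count[of True False] assms by simp_all
  then have "?N (True, True) = 1" "?N (False, True) = t1" "?N (True, False) = t2"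
    using count[of True True] s1_pos s2_pos by simp_all
  moreover have "lcm s1 s2 * ?N (False, False) = lcm s1 s2 * (gcd s1 s2 * t1 * t2)"
    using count[of False False] assms prod_gcd_lcm_nat[of s1 s2] by (simp add: ac_simps)
  then have "?N (False, False) = gcd s1 s2 * t1 * t2"
    using s1_pos s2_pos by simp
  moreover have "card (\<Union>b. coset ` divisor_class b) = (\<Sum>b \<in> UNIV. ?N b)"
    by (rule card_UN_disjoint) (simp_all add: finite_divisor_class cosets_divisor_class_disjoint)
  moreover have "(\<Sum>b \<in> UNIV. ?N b) = (\<Sum>b \<in> {(True, True), (False, True), (True, False), (False, False)}. ?N b)"
    by (rule sum.cong) auto
  ultimately show ?thesis
    by (simp add: coset_family_eq_UN_divisor_class)
qed

lemma unit_pow_diff_iff: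
  "coprime (e ^ k - 1) (int p) \<longleftrightarrow> \<not> s1 dvd k" "coprime (e ^ k - 1) (int q) \<longleftrightarrow> \<not> s2 dvd k"
proof -
  have "coprime (e ^ k - 1) (int p) \<longleftrightarrow> \<not> [e ^ k = e ^ 0] (mod int p)"
    using prime_int by (simp add: coprime_prime_right_iff cong_iff_dvd_diff)
  also have "\<dots> \<longleftrightarrow> \<not> s1 dvd k"
    unfolding order_p by (simp add: cong_0_iff)
  finally show "coprime (e ^ k - 1) (int p) \<longleftrightarrow> \<not> s1 dvd k" .
  have "coprime (e ^ k - 1) (int q) \<longleftrightarrow> \<not> [e ^ k = e ^ 0] (mod int q)"
    using prime_int by (simp add: coprime_prime_right_iff cong_iff_dvd_diff)
  also have "\<dots> \<longleftrightarrow> \<not> s2 dvd k"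
    unfolding order_q by (simp add: cong_0_iff)
  finally show "coprime (e ^ k - 1) (int q) \<longleftrightarrow> \<not> s2 dvd k" .
qed

lemma card_zero_diff_coprime:
  assumes "\<not> int p dvd a" and "\<not> int q dvd a"
  shows "int (card (zero_diff_set a)) = (int s1 * int s2 - int s1 - int s2) div int (gcd s1 s2) + 1"
proof -
  have "coprime a (int (p * q))"
    using assms prime_int by (simp add: coprime_prime_right_iff)
  then have "card (zero_diff_set a) = card {k \<in> {..<lcm s1 s2}. coprime (e ^ k - 1) (int (p * q))}"
    unfolding zero_diff_set_def using card_pow_diff_solutions[OF _ _ period_pos order_pq] n_pos by simp
  also have "{k \<in> {..<lcm s1 s2}. coprime (e ^ k - 1) (int (p * q))} =
      {k \<in> {..<lcm s1 s2}. \<not> s1 dvd k \<and> \<not> s2 dvd k}"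
    by (simp add: unit_pow_diff_iff)
  finally show ?thesis
    using card_nondivisible_below_lcm[OF s1_pos s2_pos] lcm_minus_quotients_int[OF s1_pos s2_pos]
    by simp
qed

lemma card_zero_diff_set_crt:
  "card (zero_diff_set a) = card {(y, z) \<in> {0..<int p} \<times> {0..<int q}.
     \<exists>k. [y * (e ^ k - 1) = a] (mod int p) \<and> [z * (e ^ k - 1) = a] (mod int q)}"
proof -
  have mod_reduce: "[x * c = a] (mod m) \<longleftrightarrow> [(x mod m) * c = a] (mod m)" for x c m :: int
    by (simp add: cong_def mod_mult_left_eq)
  have "zero_diff_set a = {x \<in> {0..<int p * int q}.
     \<exists>k. [(x mod int p) * (e ^ k - 1) = a] (mod int p) \<and> [(x mod int q) * (e ^ k - 1) = a] (mod int q)}"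
    unfolding zero_diff_set_def cong_mod_pq_iff by (simp flip: mod_reduce)
  then show ?thesis
    using card_crt_preimage[of "int p" "int q"
        "\<lambda>y z. \<exists>k. [y * (e ^ k - 1) = a] (mod int p) \<and> [z * (e ^ k - 1) = a] (mod int q)"]
      primes_coprime[OF prime_int] distinct_primes prime_p prime_q
    by (simp add: prime_gt_0_nat)
qed

lemma order_q_pow_s1:
  "[(e ^ s1) ^ k = (e ^ s1) ^ j] (mod int q) \<longleftrightarrow> [k = j] (mod s2 div gcd s1 s2)"
  unfolding power_mult[symmetric] order_q using s2_pos by (rule cong_mult_cancel_gcd_nat)

lemma card_solutions_mod_q:
  assumes "\<not> int q dvd a"
  shows "card {z \<in> {0..<int q}. \<exists>k. [z * (e ^ k - 1) = a] (mod int q)} = s2 - 1"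
    and "card {z \<in> {0..<int q}. \<exists>k. [z * ((e ^ s1) ^ k - 1) = a] (mod int q)} = s2 div gcd s1 s2 - 1"
proof -
  have "s2 div gcd s1 s2 > 0"
    using s2_pos by (simp add: div_greater_zero_iff gcd_le2_nat)
  then show "card {z \<in> {0..<int q}. \<exists>k. [z * (e ^ k - 1) = a] (mod int q)} = s2 - 1"
    and "card {z \<in> {0..<int q}. \<exists>k. [z * ((e ^ s1) ^ k - 1) = a] (mod int q)} = s2 div gcd s1 s2 - 1"
    using card_pow_diff_solutions_prime[OF prime_int(2) assms] s2_pos order_q order_q_pow_s1 by blast+
qed

lemma cong_mult_pow_diff_p_dvd:
  assumes "int p dvd a" and "y \<in> {0..<int p}"
  shows "[y * (e ^ k - 1) = a] (mod int p) \<longleftrightarrow> y = 0 \<or> s1 dvd k"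
proof -
  have "[y * (e ^ k - 1) = a] (mod int p) \<longleftrightarrow> int p dvd y * (e ^ k - 1)"
    using assms(1) by (simp add: cong_iff_dvd_diff dvd_diff_left_iff)
  also have "\<dots> \<longleftrightarrow> y = 0 \<or> s1 dvd k"
    using assms(2) prime_int(1) unit_pow_diff_iff(1)[of k]
    by (auto simp: prime_dvd_mult_iff coprime_prime_right_iff dest: zdvd_imp_le)
  finally show ?thesis .
qed

lemma card_zero_diff_p_dvd:
  assumes "int p dvd a" and "\<not> int q dvd a"
  shows "card (zero_diff_set a) = (s2 - 1) + (p - 1) * (s2 div gcd s1 s2 - 1)"
proof -
  define Z where "Z b = {z \<in> {0..<int q}. \<exists>k. [z * (b ^ k - 1) = a] (mod int q)}" for b
  have finite_Z: "finite (Z b)" for b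
    unfolding Z_def by (rule finite_subset[of _ "{0..<int q}"]) auto
  have card_Z: "card (Z e) = s2 - 1" "card (Z (e ^ s1)) = s2 div gcd s1 s2 - 1"
    unfolding Z_def using card_solutions_mod_q[OF assms(2)] by simp_all
  let ?pairs = "{(y, z) \<in> {0..<int p} \<times> {0..<int q}.
                  \<exists>k. [y * (e ^ k - 1) = a] (mod int p) \<and> [z * (e ^ k - 1) = a] (mod int q)}"
  have "w \<in> ?pairs \<longleftrightarrow> w \<in> {0} \<times> Z e \<union> {1..<int p} \<times> Z (e ^ s1)" for w
  proof -
    obtain y z where w: "w = (y, z)"
      by (cases w)
    show ?thesis
    proof (cases "y \<in> {0..<int p}")
      case True
      then have "(\<exists>k. [y * (e ^ k - 1) = a] (mod int p) \<and> [z * (e ^ k - 1) = a] (mod int q)) \<longleftrightarrow>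
          (if y = 0 then \<exists>k. [z * (e ^ k - 1) = a] (mod int q)
           else \<exists>j. [z * ((e ^ s1) ^ j - 1) = a] (mod int q))"
        by (auto simp: cong_mult_pow_diff_p_dvd[OF assms(1)] dvd_def simp flip: power_mult)
      with True show ?thesis
        unfolding w Z_def by auto
    qed (use prime_gt_0_nat[OF prime_p] w in auto)
  qed
  then have "?pairs = {0} \<times> Z e \<union> {1..<int p} \<times> Z (e ^ s1)"
    by blast
  then have "card (zero_diff_set a) = card ({0} \<times> Z e \<union> {1..<int p} \<times> Z (e ^ s1))"
    by (simp only: card_zero_diff_set_crt)
  also have "\<dots> = card (Z e) + (p - 1) * card (Z (e ^ s1))"
    using finite_Z by (subst card_Un_disjoint) (auto simp: card_cartesian_product nat_diff_distrib)
  finally show ?thesis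
    using card_Z by simp
qed

lemma card_zero_diff_q_dvd:
  assumes "\<not> int p dvd a" and "int q dvd a"
  shows "card (zero_diff_set a) = (s1 - 1) + (q - 1) * (s1 div gcd s1 s2 - 1)"
  using prime_pair_cosets.card_zero_diff_p_dvd[OF prime_pair_cosets_swap assms(2,1)]
  by (simp add: mult.commute gcd.commute)

lemma nonzero_not_dvd_both:
  assumes "a \<in> {1..<int (p * q)}"
  shows "\<not> (int p dvd a \<and> int q dvd a)"
proof
  assume "int p dvd a \<and> int q dvd a"
  then have "int (p * q) dvd a"
    using primes_coprime[OF prime_int] distinct_primes by (simp add: divides_mult)
  then show False
    using assms by (auto dest: zdvd_imp_le)
qed

lemma card_zero_diff_values:
  assumes "a \<in> {1..<int (p * q)}"
  shows "int (card (zero_diff_set a)) \<in>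
    {(int s1 * int s2 - int s1 - int s2) div int (gcd s1 s2) + 1,
     ((int p - 1) * int s2) div int (gcd s1 s2) - int p + int s2,
     ((int q - 1) * int s1) div int (gcd s1 s2) - int q + int s1}"
proof -
  consider "\<not> int p dvd a" "\<not> int q dvd a" | "int p dvd a" "\<not> int q dvd a" | "\<not> int p dvd a" "int q dvd a"
    using nonzero_not_dvd_both[OF assms] by blast
  then show ?thesis
  proof cases
    case 1
    then show ?thesis
      using card_zero_diff_coprime by simp
  next
    case 2
    then show ?thesis
      using card_zero_diff_p_dvd pred_add_mult_pred_div_int[of p s2 "gcd s1 s2"] prime_p s2_pos
      by (simp add: prime_gt_0_nat)
  next
    case 3
    then show ?thesis
      using card_zero_diff_q_dvd pred_add_mult_pred_div_int[of q s1 "gcd s1 s2"] prime_q s1_pos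
      by (simp add: prime_gt_0_nat)
  qed
qed

end

theorem theorem3p10:
  fixes p1 p2 s1 s2 t1 t2 g1 g2 :: nat and e :: int and h :: "int set \<Rightarrow> nat"
  assumes "prime p1" and "prime p2" and "p1 \<noteq> p2"
    and "s1 > 0" and "t1 > 0" and "s1 * t1 = p1 - 1"
    and "s2 > 0" and "t2 > 0" and "s2 * t2 = p2 - 1"
    and "residue_primroot p1 g1" and "residue_primroot p2 g2"
    and "[e = int g1 ^ t1] (mod int p1)" and "[e = int g2 ^ t2] (mod int p2)"
    and "bij_betw h (coset_family (p1 * p2) (cyc_subgroup (p1 * p2) e))
                    {0..<card (coset_family (p1 * p2) (cyc_subgroup (p1 * p2) e))}"
  shows "let n = p1 * p2; G = cyc_subgroup n e; d = gcd s1 s2;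
             a0 = (int s1 * int s2 - int s1 - int s2) div int d + 1;
             a1 = ((int p1 - 1) * int s2) div int d - int p1 + int s2;
             a2 = ((int p2 - 1) * int s1) div int d - int p2 + int s1
         in zd_function n (coset_index_fn n G h) (1 + t1 + t2 + d * t1 * t2) {a0, a1, a2}"
proof -
  interpret prime_pair_cosets p1 p2 e s1 s2
  proof
    show "[e ^ k = e ^ j] (mod int p1) \<longleftrightarrow> [k = j] (mod s1)" for k j
      using primroot_pow_cong_iff assms(1,6,10,12) by (simp add: totient_prime)
    show "[e ^ k = e ^ j] (mod int p2) \<longleftrightarrow> [k = j] (mod s2)" for k j
      using primroot_pow_cong_iff assms(2,9,11,13) by (simp add: totient_prime)
  qed (use assms in auto)
  have "inj_on h (coset_family (p1 * p2) (cyc_subgroup (p1 * p2) e))"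
    using assms(14) by (rule bij_betw_imp_inj_on)
  then show ?thesis
    unfolding Let_def zd_function_def
    using card_coset_index_fn_image card_coset_family[OF assms(6,9)] coset_index_fn_zero_diff
      card_zero_diff_values
    by simp
qed

end
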